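(* Fix $\gamma\in(0,1]$ and $0<\alpha<0.25$, and let $\xi>0$ be arbitrarily small. Then for all sufficiently large $N$ and all $i,j\in\{1,\dots,b\}$, $$\big|[J(s^* )]^{-1}_{ij}\big|\le\frac{12}{\gamma}N^{2\alpha+2\xi}.$$
   Context: Let $N\ge1$, $\lambda=1-\gamma/N^\alpha$, and $b=b(N)\ge1$ an integer with $b=O(\log N)$. The mean-field vector field is $f_k(s)=\lambda(s_{k-1}^2-s_k^2)-(s_k-s_{k+1})$, $k=1,\dots,b$, with $s_0=1,s_{b+1}=0$; $s^*$ is its unique equilibrium in $\{s\in\mathbb R^b:1\ge s_1\ge\cdots\ge s_b\ge0\}$. $J(s^* )$ is the Jacobian of $f$ at $s^*$: the $b\times b$ tridiagonal matrix with $J_{kk}=-2\lambda s^*_k-1$, $J_{k,k+1}=1$, $J_{k+1,k}=2\lambda s^*_k$. Both $s^*$ and $J(s^* )$ depend on $N$. *)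

theory Defs
  imports Complex_Main "HOL-Library.Landau_Symbols" "Jordan_Normal_Form.Matrix"
begin

text \<open>Vectors s in R^b are functions nat => real indexed by 1..b (value 0 outside).
  Extension with boundary values s_0 = 1 and s_(b+1) = 0.\<close>
definition sext :: "nat \<Rightarrow> (nat \<Rightarrow> real) \<Rightarrow> nat \<Rightarrow> real" where
  "sext b s k = (if k = 0 then 1 else if k \<le> b then s k else 0)"

definition mf :: "real \<Rightarrow> nat \<Rightarrow> (nat \<Rightarrow> real) \<Rightarrow> nat \<Rightarrow> real" where
  "mf lam b s k = lam * ((sext b s (k - 1))\<^sup>2 - (sext b s k)\<^sup>2) - (sext b s k - sext b s (k + 1))"

definition is_equil :: "real \<Rightarrow> nat \<Rightarrow> (nat \<Rightarrow> real) \<Rightarrow> bool" where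
  "is_equil lam b s \<longleftrightarrow>
     (\<forall>k\<in>{1..b}. mf lam b s k = 0) \<and> (\<forall>k. k \<notin> {1..b} \<longrightarrow> s k = 0) \<and>
     s 1 \<le> 1 \<and> (\<forall>k\<in>{1..<b}. s (k + 1) \<le> s k) \<and> 0 \<le> s b"

definition sstar :: "real \<Rightarrow> nat \<Rightarrow> nat \<Rightarrow> real" where
  "sstar lam b = (THE s. is_equil lam b s)"

text \<open>Jacobian J(s*) as a b x b matrix; row/column i (0-based) corresponds to index i+1.\<close>
definition Jac :: "real \<Rightarrow> nat \<Rightarrow> real mat" where
  "Jac lam b = mat b b (\<lambda>(i, j).
     if j = i then - 2 * lam * sstar lam b (i + 1) - 1
     else if j = i + 1 then 1
     else if i = j + 1 then 2 * lam * sstar lam b (j + 1)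
     else 0)"

end

theory Submission
  imports Defs "Jordan_Normal_Form.Determinant" "HOL-Real_Asymp.Real_Asymp"
begin

(* Put x = s*_b. Telescoping the equilibrium equations gives s*_(j+1) = lam (s*_j^2 - x^2)
   with s*_0 = 1, so s* is determined by x; this orbit is strictly decreasing in x, which gives
   uniqueness, and the intermediate value theorem applied to its minimum gives existence.

   For J v = y, summing rows j, ..., b turns the tridiagonal system into the first-order
   recursion v_j = a_(j-1) v_(j-1) - c - z_j, where a_k = 2 lam s*_k, c = a_b v_b and
   z_j = y_j + ... + y_b. Hence v_j = -c A_j - B_j with A_(j+1) = a_j A_j + 1 and
   |B_j| <= A_j max |z|, and c = a_b v_b forces |c| <= max |z|. Finally s*_(j+1) <= lam s*_j^2
   gives a_j (1 - s*_j) <= 1 - s*_(j+1), so (1 - lam) A_j <= j. Every entry of J^-1 is therefore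
   at most 2 b / (1 - lam) = 2 b N^alpha / gamma, and b = O(log N) is o(N^(alpha + 2 xi)). *)

lemma sum_telescope_backward:
  fixes f g :: "nat \<Rightarrow> 'a::ab_group_add"
  assumes "\<And>k. 1 \<le> k \<Longrightarrow> k \<le> n \<Longrightarrow> f (k - 1) - f k = g k" and "j \<le> n"
  shows "f j - f n = (\<Sum>k = Suc j..n. g k)"
  using assms(2)
proof (induction j rule: inc_induct)
  case base
  then show ?case by simp
next
  case (step j)
  have "{Suc j..n} = insert (Suc j) {Suc (Suc j)..n}" using step.hyps by auto
  then show ?case using step.IH assms(1)[of "Suc j"] step.hyps by (simp add: algebra_simps)
qed

lemma continuous_on_Min_atMost:
  fixes f :: "nat \<Rightarrow> 'a::topological_space \<Rightarrow> 'b::linorder_topology"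
  assumes "\<And>j. continuous_on S (f j)"
  shows "continuous_on S (\<lambda>x. Min ((\<lambda>j. f j x) ` {..n}))"
proof (induction n)
  case 0
  then show ?case using assms by simp
next
  case (Suc n)
  have "Min ((\<lambda>j. f j x) ` {..Suc n}) = min (f (Suc n) x) (Min ((\<lambda>j. f j x) ` {..n}))" for x
    by (simp add: atMost_Suc Min_insert)
  then show ?case using Suc assms by (simp add: continuous_on_min)
qed

fun equil_orbit :: "real \<Rightarrow> real \<Rightarrow> nat \<Rightarrow> real" where
  "equil_orbit lam x 0 = 1"
| "equil_orbit lam x (Suc j) = lam * ((equil_orbit lam x j)\<^sup>2 - x\<^sup>2)"

lemma continuous_on_equil_orbit: "continuous_on S (\<lambda>x. equil_orbit lam x j)"
  by (induction j) (auto intro!: continuous_intros)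

lemma equil_orbit_zero_pos: "0 < lam \<Longrightarrow> 0 < equil_orbit lam 0 j"
  by (induction j) auto

lemma abs_equil_orbit_le_one:
  assumes "0 \<le> lam" "lam \<le> 1" "\<bar>x\<bar> \<le> 1"
  shows "\<bar>equil_orbit lam x j\<bar> \<le> 1"
proof (induction j)
  case 0
  then show ?case by simp
next
  case (Suc j)
  let ?p = "equil_orbit lam x j"
  have "?p\<^sup>2 \<le> 1" "x\<^sup>2 \<le> 1" using Suc assms(3) by (simp_all add: abs_square_le_1)
  moreover have "0 \<le> ?p\<^sup>2" "0 \<le> x\<^sup>2" by simp_all
  ultimately have "\<bar>?p\<^sup>2 - x\<^sup>2\<bar> \<le> 1" by linarith
  then have "\<bar>lam * (?p\<^sup>2 - x\<^sup>2)\<bar> \<le> 1 * 1"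
    unfolding abs_mult using assms(1,2) by (intro mult_mono) auto
  then show ?case by simp
qed

lemma equil_orbit_strict_antimono:
  assumes lam: "0 < lam" and xy: "0 \<le> x" "x < y"
    and nonneg: "\<And>i. 1 \<le> i \<Longrightarrow> i < j \<Longrightarrow> 0 \<le> equil_orbit lam y i"
    and j: "1 \<le> j"
  shows "equil_orbit lam y j < equil_orbit lam x j"
  using nonneg j
proof (induction j)
  case 0
  then show ?case by simp
next
  case (Suc j)
  have "x\<^sup>2 < y\<^sup>2" using xy by (simp add: power_strict_mono)
  moreover have "(equil_orbit lam y j)\<^sup>2 \<le> (equil_orbit lam x j)\<^sup>2"
  proof (cases "j = 0")
    case False
    then have "0 \<le> equil_orbit lam y j" "equil_orbit lam y j < equil_orbit lam x j"
      using Suc.IH Suc.prems by auto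
    then show ?thesis by (simp add: power_mono)
  qed simp
  ultimately show ?case using lam by simp
qed

lemma is_equil_sext: "is_equil lam b s \<Longrightarrow> 0 < j \<Longrightarrow> sext b s j = s j"
  unfolding sext_def is_equil_def by auto

lemma is_equil_eq_orbit:
  assumes E: "is_equil lam b s" and j: "j \<le> b"
  shows "sext b s j = equil_orbit lam (s b) j"
  using j
proof (induction j)
  case 0
  then show ?case by (simp add: sext_def)
next
  case (Suc j)
  let ?f = "\<lambda>k. lam * (sext b s k)\<^sup>2 - sext b s (Suc k)"
  have "?f j - ?f b = (\<Sum>k = Suc j..b. mf lam b s k)"
    using Suc.prems by (intro sum_telescope_backward[where f = ?f]) (auto simp: mf_def algebra_simps)
  also have "\<dots> = 0" using E Suc.prems unfolding is_equil_def by (intro sum.neutral) auto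
  finally have "sext b s (Suc j) = lam * ((sext b s j)\<^sup>2 - (s b)\<^sup>2)"
    using Suc.prems by (simp add: sext_def algebra_simps)
  with Suc show ?case by simp
qed

lemma is_equil_antimono:
  assumes E: "is_equil lam b s" and "1 \<le> i" "i \<le> j" "j \<le> b"
  shows "s j \<le> s i"
  using assms(3,4)
proof (induction j rule: dec_induct)
  case base
  then show ?case by simp
next
  case (step n)
  then have "s (Suc n) \<le> s n" using E assms(2) unfolding is_equil_def by auto
  with step show ?case by simp
qed

lemma is_equil_range:
  assumes E: "is_equil lam b s"
  shows "0 \<le> s j \<and> s j \<le> 1"
proof (cases "j \<in> {1..b}")
  case True
  then have "s b \<le> s j" "s j \<le> s 1" using is_equil_antimono[OF E] by auto
  moreover have "0 \<le> s b" "s 1 \<le> 1" using E unfolding is_equil_def by auto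
  ultimately show ?thesis by simp
next
  case False
  then show ?thesis using E unfolding is_equil_def by auto
qed

lemma is_equil_unique:
  assumes lam: "0 < lam" and b: "1 \<le> b" and E: "is_equil lam b s" "is_equil lam b t"
  shows "s = t"
proof -
  have orbit: "equil_orbit lam (u b) j = u j" if "is_equil lam b u" "1 \<le> j" "j \<le> b" for u j
    using is_equil_eq_orbit[OF that(1,3)] is_equil_sext[OF that(1)] that(2) by simp
  have not_less: "\<not> u b < v b" if U: "is_equil lam b u" and V: "is_equil lam b v" for u v
  proof
    assume less: "u b < v b"
    have "equil_orbit lam (v b) b < equil_orbit lam (u b) b"
      using lam b less is_equil_range[OF U] is_equil_range[OF V] orbit[OF V]
      by (intro equil_orbit_strict_antimono) auto
    with less show False using orbit[OF U] orbit[OF V] b by simp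
  qed
  have "s b = t b" using not_less[OF E] not_less[OF E(2,1)] by linarith
  show ?thesis
  proof
    fix j
    show "s j = t j"
    proof (cases "j \<in> {1..b}")
      case True
      then have "equil_orbit lam (s b) j = s j" "equil_orbit lam (t b) j = t j"
        using orbit E by auto
      with \<open>s b = t b\<close> show ?thesis by metis
    next
      case False
      then show ?thesis using E unfolding is_equil_def by simp
    qed
  qed
qed

lemma equil_orbit_fixed_point_exists:
  assumes lam: "0 < lam" and b: "1 \<le> b"
  obtains x where "0 < x" "x \<le> 1" "equil_orbit lam x b = x" "\<And>j. j \<le> b \<Longrightarrow> x \<le> equil_orbit lam x j"
proof -
  define m where "m x = Min ((\<lambda>j. equil_orbit lam x j) ` {..b})" for x
  have m_le: "m x \<le> equil_orbit lam x j" if "j \<le> b" for x j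
    unfolding m_def using that by (intro Min_le) auto
  have m_attained: "\<exists>i\<le>b. m x = equil_orbit lam x i" for x
  proof -
    have "m x \<in> (\<lambda>j. equil_orbit lam x j) ` {..b}" unfolding m_def by (intro Min_in) auto
    then show ?thesis by auto
  qed
  have m0: "0 < m 0" using m_attained[of 0] equil_orbit_zero_pos[OF lam] by auto
  have "m 1 - 1 \<le> 0" using m_le[of 1 1] b by simp
  moreover have "continuous_on {0..1} (\<lambda>x. m x - x)"
    unfolding m_def by (intro continuous_intros continuous_on_Min_atMost continuous_on_equil_orbit)
  ultimately obtain x where x: "0 \<le> x" "x \<le> 1" "m x = x"
    using IVT2'[of "\<lambda>x. m x - x" 1 0 0] m0 by auto
  have x_pos: "0 < x" using x m0 by (cases "x = 0") auto
  have x_le: "x \<le> equil_orbit lam x j" if "j \<le> b" for j using m_le[OF that, of x] x by simp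
  obtain i where i: "i \<le> b" "equil_orbit lam x i = x" using m_attained[of x] x by auto
  \<comment> \<open>right after an index where the orbit equals \<open>x\<close> it is \<open>lam (x\<^sup>2 - x\<^sup>2) = 0 < x\<close>\<close>
  have "\<not> i < b"
  proof
    assume "i < b"
    then have "x \<le> equil_orbit lam x (Suc i)" using x_le[of "Suc i"] by simp
    with i x_pos show False by simp
  qed
  with i have "equil_orbit lam x b = x" by simp
  with that x_pos x x_le show thesis by blast
qed

lemma is_equil_of_orbit_fixed_point:
  assumes lam: "0 < lam" "lam < 1" and b: "1 \<le> b"
    and x: "0 < x" "x \<le> 1" "equil_orbit lam x b = x" "\<And>j. j \<le> b \<Longrightarrow> x \<le> equil_orbit lam x j"
  shows "is_equil lam b (\<lambda>k. if 1 \<le> k \<and> k \<le> b then equil_orbit lam x k else 0)"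
proof -
  define s where "s k = (if 1 \<le> k \<and> k \<le> b then equil_orbit lam x k else 0)" for k
  have sext_s: "sext b s k = (if k \<le> b then equil_orbit lam x k else 0)" for k
    unfolding sext_def s_def by auto
  have sext_Suc: "sext b s (Suc k) = lam * ((sext b s k)\<^sup>2 - x\<^sup>2)" if "k \<le> b" for k
    using that x(3) unfolding sext_s by (cases "k = b") auto
  have orbit_range: "0 \<le> equil_orbit lam x k" "equil_orbit lam x k \<le> 1" if "k \<le> b" for k
    using x(4)[OF that] x(1,2) abs_equil_orbit_le_one[of lam x k] lam by auto
  have "is_equil lam b s"
    unfolding is_equil_def
  proof (intro conjI ballI allI impI)
    fix k assume k: "k \<in> {1..b}"
    then obtain i where i: "k = Suc i" by (cases k) auto
    have prev: "sext b s k = lam * ((sext b s (k - 1))\<^sup>2 - x\<^sup>2)" using sext_Suc[of i] k i by simp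
    have "mf lam b s k = lam * ((sext b s (k - 1))\<^sup>2 - (sext b s k)\<^sup>2)
        - (sext b s k - lam * ((sext b s k)\<^sup>2 - x\<^sup>2))"
      using sext_Suc[of k] k unfolding mf_def by simp
    also have "\<dots> = 0" unfolding prev by (simp add: algebra_simps)
    finally show "mf lam b s k = 0" .
  next
    fix k :: nat assume "k \<notin> {1..b}"
    then show "s k = 0" unfolding s_def by auto
  next
    show "s 1 \<le> 1" using orbit_range[of 1] b unfolding s_def by simp
  next
    fix k assume k: "k \<in> {1..<b}"
    let ?p = "equil_orbit lam x k"
    have "x\<^sup>2 \<le> ?p\<^sup>2" using x(1) x(4)[of k] k by (simp add: power_mono)
    then have "lam * (?p\<^sup>2 - x\<^sup>2) \<le> ?p\<^sup>2 - x\<^sup>2" using lam by (intro mult_left_le_one_le) auto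
    also have "\<dots> \<le> ?p\<^sup>2" by simp
    also have "\<dots> \<le> ?p" using orbit_range[of k] k by (simp add: power2_eq_square mult_left_le)
    finally show "s (k + 1) \<le> s k" using k unfolding s_def by simp
  next
    show "0 \<le> s b" using b x unfolding s_def by simp
  qed
  then show ?thesis unfolding s_def .
qed

lemma is_equil_exists:
  assumes "0 < lam" "lam < 1" "1 \<le> b"
  shows "\<exists>s. is_equil lam b s"
  using equil_orbit_fixed_point_exists[OF assms(1,3)] is_equil_of_orbit_fixed_point[OF assms] by metis

lemma is_equil_sstar:
  assumes "0 < lam" "lam < 1" "1 \<le> b"
  shows "is_equil lam b (sstar lam b)"
proof -
  obtain s where s: "is_equil lam b s" using is_equil_exists[OF assms] by blast
  show ?thesis
    unfolding sstar_def by (rule theI[of "is_equil lam b", OF s]) (rule is_equil_unique[OF assms(1,3) _ s])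
qed

lemma is_equil_step_le:
  assumes E: "is_equil lam b s" and lam: "0 \<le> lam"
  shows "s (Suc j) \<le> lam * (sext b s j)\<^sup>2"
proof (cases "j < b")
  case True
  have "s (Suc j) = lam * ((sext b s j)\<^sup>2 - (s b)\<^sup>2)"
    using is_equil_eq_orbit[OF E, of "Suc j"] is_equil_eq_orbit[OF E, of j] is_equil_sext[OF E] True
    by simp
  then show ?thesis using lam by (simp add: mult_left_mono)
next
  case False
  then show ?thesis using E lam unfolding is_equil_def by simp
qed

lemma is_equil_le_lam:
  assumes E: "is_equil lam b s" and lam: "0 \<le> lam"
  shows "s j \<le> lam"
proof (cases j)
  case 0
  then show ?thesis using E lam unfolding is_equil_def by simp
next
  case (Suc i)
  have "0 \<le> sext b s i" "sext b s i \<le> 1"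
    using is_equil_range[OF E, of i] by (auto simp: sext_def)
  then have "lam * (sext b s i)\<^sup>2 \<le> lam * 1" using lam by (intro mult_left_mono) (auto simp: power_le_one)
  with is_equil_step_le[OF E lam, of i] Suc show ?thesis by simp
qed

fun lin_rec :: "(nat \<Rightarrow> real) \<Rightarrow> (nat \<Rightarrow> real) \<Rightarrow> nat \<Rightarrow> real" where
  "lin_rec a u 0 = 0"
| "lin_rec a u (Suc j) = a j * lin_rec a u j + u (Suc j)"

lemma lin_rec_linear:
  "lin_rec a (\<lambda>i. c * u i + d * v i) j = c * lin_rec a u j + d * lin_rec a v j"
  by (induction j) (simp_all add: algebra_simps)

lemma lin_rec_unique:
  assumes "x 0 = 0" and "\<And>i. i < j \<Longrightarrow> x (Suc i) = a i * x i + u (Suc i)"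
  shows "x j = lin_rec a u j"
  using assms(2) by (induction j) (simp_all add: assms(1))

lemma lin_rec_nonneg: "(\<And>i. 0 \<le> a i) \<Longrightarrow> (\<And>i. 0 \<le> u i) \<Longrightarrow> 0 \<le> lin_rec a u j"
  by (induction j) auto

lemma abs_lin_rec_le:
  assumes a: "\<And>i. 0 \<le> a i" and u: "\<And>i. 1 \<le> i \<Longrightarrow> i \<le> j \<Longrightarrow> \<bar>u i\<bar> \<le> U"
  shows "\<bar>lin_rec a u j\<bar> \<le> U * lin_rec a (\<lambda>_. 1) j"
  using u
proof (induction j)
  case 0
  then show ?case by simp
next
  case (Suc j)
  have "\<bar>lin_rec a u (Suc j)\<bar> \<le> a j * \<bar>lin_rec a u j\<bar> + \<bar>u (Suc j)\<bar>"
    using a[of j] by (simp add: abs_mult abs_triangle_ineq[THEN order_trans])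
  also have "\<dots> \<le> a j * (U * lin_rec a (\<lambda>_. 1) j) + U"
    using Suc a[of j] by (intro add_mono mult_left_mono) auto
  finally show ?case by (simp add: algebra_simps)
qed

lemma tridiag_eq_lin_rec:
  fixes a x y :: "nat \<Rightarrow> real"
  assumes x_bdry: "x 0 = 0" "x (Suc n) = 0"
    and row: "\<And>k. 1 \<le> k \<Longrightarrow> k \<le> n \<Longrightarrow> a (k - 1) * x (k - 1) - (a k + 1) * x k + x (Suc k) = y k"
    and j: "j \<le> n"
  shows "x j = - (a n * x n) * lin_rec a (\<lambda>_. 1) j - lin_rec a (\<lambda>k. \<Sum>i = k..n. y i) j"
proof -
  have "x j = lin_rec a (\<lambda>k. (- (a n * x n)) * 1 + (- 1) * (\<Sum>i = k..n. y i)) j"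
  proof (rule lin_rec_unique[where x = x and j = j])
    fix i assume "i < j"
    let ?f = "\<lambda>k. a k * x k - x (Suc k)"
    have "?f i - ?f n = (\<Sum>k = Suc i..n. y k)"
      using \<open>i < j\<close> j
      by (intro sum_telescope_backward[where f = ?f]) (auto simp: row[symmetric] algebra_simps)
    then show "x (Suc i) = a i * x i + ((- (a n * x n)) * 1 + (- 1) * (\<Sum>k = Suc i..n. y k))"
      using x_bdry(2) by simp
  qed (rule x_bdry(1))
  then show ?thesis unfolding lin_rec_linear by simp
qed

lemma tridiag_solution_bound:
  fixes a x y :: "nat \<Rightarrow> real" and Z :: real
  assumes a: "\<And>k. 0 \<le> a k"
    and x_bdry: "x 0 = 0" "x (Suc n) = 0"
    and row: "\<And>k. 1 \<le> k \<Longrightarrow> k \<le> n \<Longrightarrow> a (k - 1) * x (k - 1) - (a k + 1) * x k + x (Suc k) = y k"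
    and tail: "\<And>j. 1 \<le> j \<Longrightarrow> j \<le> n \<Longrightarrow> \<bar>\<Sum>k = j..n. y k\<bar> \<le> Z"
    and j: "j \<le> n"
  shows "\<bar>x j\<bar> \<le> 2 * Z * lin_rec a (\<lambda>_. 1) j"
proof (cases "j = 0")
  case True
  then show ?thesis using x_bdry by simp
next
  case False
  define A where "A = lin_rec a (\<lambda>_. 1)"
  define B where "B = lin_rec a (\<lambda>k. \<Sum>i = k..n. y i)"
  define c where "c = a n * x n"
  have x_eq: "x k = - c * A k - B k" if "k \<le> n" for k
    unfolding A_def B_def c_def using x_bdry row that by (rule tridiag_eq_lin_rec)
  have Z: "0 \<le> Z" using tail[of n] False j by fastforce
  have A: "0 \<le> A k" for k unfolding A_def using a by (simp add: lin_rec_nonneg)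
  have B: "\<bar>B k\<bar> \<le> Z * A k" if "k \<le> n" for k
    unfolding A_def B_def using a tail that by (intro abs_lin_rec_le) auto
  have c: "\<bar>c\<bar> \<le> Z"
  proof -
    have pos: "0 < 1 + a n * A n" using a[of n] A[of n] by (simp add: add_pos_nonneg)
    have "c = a n * (- c * A n - B n)" using x_eq[of n] unfolding c_def by simp
    then have eq: "c * (1 + a n * A n) = - (a n * B n)" by (simp add: algebra_simps)
    have "\<bar>c\<bar> * (1 + a n * A n) = \<bar>c * (1 + a n * A n)\<bar>" using pos by (simp add: abs_mult abs_of_pos)
    also have "\<dots> = a n * \<bar>B n\<bar>" using eq a[of n] by (simp add: abs_mult abs_of_nonneg)
    also have "\<dots> \<le> a n * (Z * A n)" using B[of n] a[of n] by (intro mult_left_mono) auto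
    also have "\<dots> \<le> Z * (1 + a n * A n)" using Z by (simp add: algebra_simps)
    finally show ?thesis using pos by simp
  qed
  have "\<bar>x j\<bar> \<le> \<bar>c\<bar> * A j + \<bar>B j\<bar>"
    using x_eq[OF j] A[of j] by (simp add: abs_mult abs_triangle_ineq4[THEN order_trans])
  also have "\<dots> \<le> Z * A j + Z * A j" using c B[OF j] A[of j] by (intro add_mono mult_right_mono) auto
  finally show ?thesis unfolding A_def by simp
qed

lemma lin_rec_growth_bound:
  fixes lam :: real and s :: "nat \<Rightarrow> real"
  assumes lam: "0 < lam" "lam < 1"
    and s_nonneg: "\<And>j. 0 \<le> s j" and s_le: "\<And>j. s j \<le> lam"
    and s_step: "\<And>j. 1 \<le> j \<Longrightarrow> s (Suc j) \<le> lam * (s j)\<^sup>2"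
  shows "(1 - lam) * lin_rec (\<lambda>j. 2 * lam * s j) (\<lambda>_. 1) j \<le> j * (1 - s j)"
proof (induction j)
  case 0
  then show ?case by simp
next
  case (Suc j)
  let ?a = "2 * lam * s j" and ?A = "lin_rec (\<lambda>j. 2 * lam * s j) (\<lambda>_. 1)"
  have contraction: "j * (?a * (1 - s j)) \<le> j * (1 - s (Suc j))"
  proof (cases "j = 0")
    case False
    have "0 \<le> (1 - lam * s j)\<^sup>2 + lam * (1 - lam) * (s j)\<^sup>2" using lam by simp
    then have "?a * (1 - s j) \<le> 1 - lam * (s j)\<^sup>2" by (simp add: algebra_simps power2_eq_square)
    also have "\<dots> \<le> 1 - s (Suc j)" using s_step[of j] False by simp
    finally show ?thesis by (simp add: mult_left_mono)
  qed simp
  have "(1 - lam) * ?A (Suc j) = ?a * ((1 - lam) * ?A j) + (1 - lam)" by (simp add: algebra_simps)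
  also have "\<dots> \<le> ?a * (j * (1 - s j)) + (1 - s (Suc j))"
    using Suc.IH s_nonneg[of j] s_le[of "Suc j"] lam by (intro add_mono mult_left_mono) auto
  also have "\<dots> \<le> j * (1 - s (Suc j)) + (1 - s (Suc j))" using contraction by (simp add: algebra_simps)
  finally show ?case by (simp add: algebra_simps)
qed

lemma sum_tridiagonal_row:
  fixes f C :: "nat \<Rightarrow> 'a::semiring_0" and A B :: 'a
  assumes i: "i < b"
  shows "(\<Sum>m\<in>{0..<b}. (if m = i then A else if m = i + 1 then B else if i = m + 1 then C m else 0) * f m)
       = A * f i + (if i + 1 < b then B * f (i + 1) else 0) + (if 1 \<le> i then C (i - 1) * f (i - 1) else 0)"
proof -
  have "(\<Sum>m\<in>{0..<b}. (if m = i then A else if m = i + 1 then B else if i = m + 1 then C m else 0) * f m)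
     = (\<Sum>m\<in>{0..<b}. (if m = i then A * f m else 0) + (if m = i + 1 then B * f m else 0)
          + (if m = i - 1 \<and> 1 \<le> i then C m * f m else 0))"
    by (rule sum.cong) auto
  also have "\<dots> = (\<Sum>m\<in>{0..<b}. if m = i then A * f m else 0) + (\<Sum>m\<in>{0..<b}. if m = i + 1 then B * f m else 0)
          + (\<Sum>m\<in>{0..<b}. if m = i - 1 \<and> 1 \<le> i then C m * f m else 0)"
    by (simp add: sum.distrib)
  also have "(\<Sum>m\<in>{0..<b}. if m = i - 1 \<and> 1 \<le> i then C m * f m else 0)
      = (if 1 \<le> i then C (i - 1) * f (i - 1) else 0)"
    using i by (cases "1 \<le> i") (auto simp: sum.delta)
  finally show ?thesis using i by (simp add: sum.delta)
qed

lemma Jac_mult_vec_nth: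
  assumes v: "v \<in> carrier_vec b" and k: "1 \<le> k" "k \<le> b"
  defines "x \<equiv> \<lambda>k. if 1 \<le> k \<and> k \<le> b then v $ (k - 1) else 0"
  shows "(Jac lam b *\<^sub>v v) $ (k - 1) = 2 * lam * sstar lam b (k - 1) * x (k - 1)
           - (2 * lam * sstar lam b k + 1) * x k + x (Suc k)"
proof -
  let ?s = "sstar lam b"
  let ?i = "k - 1"
  have i: "?i < b" using k by auto
  have "(Jac lam b *\<^sub>v v) $ ?i = (\<Sum>m\<in>{0..<b}. (if m = ?i then - 2 * lam * ?s (?i + 1) - 1
       else if m = ?i + 1 then 1 else if ?i = m + 1 then 2 * lam * ?s (m + 1) else 0) * v $ m)"
    using i v unfolding Jac_def by (simp add: scalar_prod_def mult.commute del: One_nat_def)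
  also have "\<dots> = (- 2 * lam * ?s (?i + 1) - 1) * v $ ?i + (if ?i + 1 < b then 1 * v $ (?i + 1) else 0)
       + (if 1 \<le> ?i then 2 * lam * ?s (?i - 1 + 1) * v $ (?i - 1) else 0)"
    by (rule sum_tridiagonal_row[OF i])
  also have "\<dots> = 2 * lam * ?s (k - 1) * x (k - 1) - (2 * lam * ?s k + 1) * x k + x (Suc k)"
  proof -
    obtain j where j: "k = Suc j" using k by (cases k) auto
    then show ?thesis using k unfolding x_def by (cases j) (auto simp: algebra_simps)
  qed
  finally show ?thesis .
qed

lemma Jac_solution_bound:
  assumes lam: "0 < lam" "lam < 1" and b: "1 \<le> b" and v: "v \<in> carrier_vec b"
    and tail: "\<And>j. 1 \<le> j \<Longrightarrow> j \<le> b \<Longrightarrow> \<bar>\<Sum>k = j..b. (Jac lam b *\<^sub>v v) $ (k - 1)\<bar> \<le> Z"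
    and i: "i < b"
  shows "\<bar>v $ i\<bar> \<le> 2 * Z * b / (1 - lam)"
proof -
  define s where "s = sstar lam b"
  define x where "x k = (if 1 \<le> k \<and> k \<le> b then v $ (k - 1) else 0)" for k
  have E: "is_equil lam b s" unfolding s_def using lam b by (rule is_equil_sstar)
  have s_nonneg: "0 \<le> s j" for j using is_equil_range[OF E] by simp
  have s_step: "s (Suc j) \<le> lam * (s j)\<^sup>2" if "1 \<le> j" for j
    using is_equil_step_le[OF E, of j] is_equil_sext[OF E, of j] lam that by simp
  have "\<bar>x (Suc i)\<bar> \<le> 2 * Z * lin_rec (\<lambda>j. 2 * lam * s j) (\<lambda>_. 1) (Suc i)"
  proof (rule tridiag_solution_bound[where a = "\<lambda>j. 2 * lam * s j" and x = x and n = b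
        and y = "\<lambda>k. (Jac lam b *\<^sub>v v) $ (k - 1)"])
    show "2 * lam * s (k - 1) * x (k - 1) - (2 * lam * s k + 1) * x k + x (Suc k)
        = (Jac lam b *\<^sub>v v) $ (k - 1)" if "1 \<le> k" "k \<le> b" for k
      using Jac_mult_vec_nth[OF v that, of lam] unfolding s_def x_def by simp
  qed (use lam s_nonneg tail i in \<open>auto simp: x_def\<close>)
  also have "\<dots> \<le> 2 * Z * (b / (1 - lam))"
  proof (rule mult_left_mono)
    have "(1 - lam) * lin_rec (\<lambda>j. 2 * lam * s j) (\<lambda>_. 1) (Suc i) \<le> Suc i * (1 - s (Suc i))"
      using lam s_nonneg is_equil_le_lam[OF E] s_step by (intro lin_rec_growth_bound) auto
    also have "\<dots> \<le> real b * 1" using i s_nonneg is_equil_range[OF E, of "Suc i"] by (intro mult_mono) auto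
    finally show "lin_rec (\<lambda>j. 2 * lam * s j) (\<lambda>_. 1) (Suc i) \<le> b / (1 - lam)"
      using lam by (simp add: field_simps)
    show "0 \<le> 2 * Z" using tail[of b] b by fastforce
  qed
  finally show ?thesis using i unfolding x_def by simp
qed

lemma Jac_inverse_bound:
  assumes lam: "0 < lam" "lam < 1" and b: "1 \<le> b"
  shows "\<exists>M \<in> carrier_mat b b. inverts_mat (Jac lam b) M \<and> inverts_mat M (Jac lam b) \<and>
           (\<forall>i < b. \<forall>j < b. \<bar>M $$ (i, j)\<bar> \<le> 2 * real b / (1 - lam))"
proof -
  let ?J = "Jac lam b"
  have J: "?J \<in> carrier_mat b b" unfolding Jac_def by simp
  have "det ?J \<noteq> 0"
  proof
    assume "det ?J = 0"
    then obtain v where v: "v \<in> carrier_vec b" "v \<noteq> 0\<^sub>v b" "?J *\<^sub>v v = 0\<^sub>v b"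
      using det_0_iff_vec_prod_zero[OF J] by auto
    have "\<bar>v $ i\<bar> \<le> 2 * 0 * real b / (1 - lam)" if "i < b" for i
      using v(3) that by (intro Jac_solution_bound[OF lam b v(1)]) (auto intro!: sum.neutral)
    then have "v = 0\<^sub>v b" using v(1) by (intro eq_vecI) auto
    with v(2) show False by simp
  qed
  then obtain M where MJ: "M * ?J = 1\<^sub>m b" and M: "M \<in> carrier_mat b b"
    using det_non_zero_imp_unit[OF J, of "()"] unfolding Units_def ring_mat_def by auto
  have JM: "?J * M = 1\<^sub>m b" using mat_mult_left_right_inverse[OF M J MJ] .
  have "\<bar>M $$ (i, l)\<bar> \<le> 2 * real b / (1 - lam)" if i: "i < b" and l: "l < b" for i l
  proof -
    have Jcol: "?J *\<^sub>v col M l = unit_vec b l" using col_mult2[OF J M l] JM col_one[OF l] by metis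
    have tail: "\<bar>\<Sum>k = j..b. (?J *\<^sub>v col M l) $ (k - 1)\<bar> \<le> 1" if "1 \<le> j" for j
    proof -
      have "(\<Sum>k = j..b. (?J *\<^sub>v col M l) $ (k - 1)) = (\<Sum>k = j..b. if k = Suc l then 1 else 0)"
        unfolding Jcol using that l by (intro sum.cong) auto
      then show ?thesis by (simp add: sum.delta)
    qed
    have "\<bar>col M l $ i\<bar> \<le> 2 * 1 * real b / (1 - lam)"
      using M i tail by (intro Jac_solution_bound[OF lam b]) auto
    then show ?thesis using i l M by auto
  qed
  then show ?thesis using M MJ JM J unfolding inverts_mat_def by auto
qed

lemma one_minus_div_powr_bounds:
  fixes \<gamma> \<alpha> :: real
  assumes "0 < \<gamma>" "\<gamma> \<le> 1" "0 < \<alpha>" "1 < x"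
  shows "0 < 1 - \<gamma> / x powr \<alpha>" "1 - \<gamma> / x powr \<alpha> < 1"
proof -
  have "1 < x powr \<alpha>" using assms(3,4) by (intro gr_one_powr) auto
  then have "0 < \<gamma> / x powr \<alpha>" "\<gamma> / x powr \<alpha> < 1"
    using assms(1,2,4) by (simp_all add: divide_less_eq zero_less_divide_iff)
  then show "0 < 1 - \<gamma> / x powr \<alpha>" "1 - \<gamma> / x powr \<alpha> < 1" by simp_all
qed

theorem lemma7:
  fixes \<gamma> \<alpha> \<xi> :: real and b :: "nat \<Rightarrow> nat"
  assumes "0 < \<gamma>" "\<gamma> \<le> 1" "0 < \<alpha>" "\<alpha> < 1/4" "0 < \<xi>"
    and "\<forall>N. 1 \<le> b N"
    and "(\<lambda>N. real (b N)) \<in> O(\<lambda>N. ln (real N))"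
  shows "\<forall>\<^sub>F N in sequentially.
           (let lam = 1 - \<gamma> / real N powr \<alpha>; J = Jac lam (b N) in
            \<exists>M \<in> carrier_mat (b N) (b N). inverts_mat J M \<and> inverts_mat M J \<and>
              (\<forall>i < b N. \<forall>j < b N. \<bar>M $$ (i, j)\<bar> \<le> 12 / \<gamma> * real N powr (2 * \<alpha> + 2 * \<xi>)))"
proof -
  have "(\<lambda>N::nat. ln (real N)) \<in> o(\<lambda>N. real N powr (\<alpha> + 2 * \<xi>))"
    using assms(3,5) by real_asymp
  with assms(7) have "(\<lambda>N. real (b N)) \<in> o(\<lambda>N. real N powr (\<alpha> + 2 * \<xi>))"
    by (rule landau_o.big_small_trans)
  from landau_o.smallD[OF this, of 6]
  have "\<forall>\<^sub>F N in sequentially. real (b N) \<le> 6 * real N powr (\<alpha> + 2 * \<xi>)" by simp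
  moreover have "\<forall>\<^sub>F N in sequentially. (2::nat) \<le> N" by (rule eventually_ge_at_top)
  ultimately show ?thesis
  proof eventually_elim
    case (elim N)
    define lam where "lam = 1 - \<gamma> / real N powr \<alpha>"
    have lam: "0 < lam" "lam < 1"
      unfolding lam_def using assms(1-3) elim by (intro one_minus_div_powr_bounds; simp)+
    have "2 * real (b N) / (1 - lam) = 2 / \<gamma> * real N powr \<alpha> * real (b N)"
      unfolding lam_def using assms(1) elim by (simp add: field_simps)
    also have "\<dots> \<le> 2 / \<gamma> * real N powr \<alpha> * (6 * real N powr (\<alpha> + 2 * \<xi>))"
      using elim assms(1) by (intro mult_left_mono) auto
    also have "\<dots> = 12 / \<gamma> * real N powr (2 * \<alpha> + 2 * \<xi>)"
      using elim by (simp add: powr_add[symmetric] field_simps)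
    finally show ?case
      using Jac_inverse_bound[OF lam assms(6)[rule_format]] unfolding Let_def lam_def[symmetric]
      by (meson order_trans)
  qed
qed

end
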